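(* Consider the affine discrete-time system $$x_{k+1}=Ax_k+Bu_k+e,\qquad y_k=Cx_k+Du_k+r,$$ with state $x_k\in\mathbb{R}^n$, input $u_k\in\mathbb{R}^m$, output $y_k\in\mathbb{R}^p$, matrices $A,B,C,D$ of compatible dimensions and constant vectors $e\in\mathbb{R}^n$, $r\in\mathbb{R}^p$. Let $\{u_k^{d},x_k^{d},y_k^{d}\}_{k=0}^{N-1}$ be an input-state-output trajectory of this system, and let $L\in\mathbb{N}$ with $L\le N$. Suppose the data $\{u_k^d\}_{k=0}^{N-1}$, $\{x_k^d\}_{k=0}^{N-L}$ are persistently exciting of order $L$, i.e. $$\operatorname{rank}\begin{bmatrix}H_L(u^d)\\ H_1(x^d_{[0,N-L]})\\ \mathbb{1}_{N-L+1}^\top\end{bmatrix}=mL+n+1 .$$ Then a sequence $\{u_k,y_k\}_{k=0}^{L-1}$ is an input-output trajectory of the system (for some initial state) if and only if there exists $\alpha\in\mathbb{R}^{N-L+1}$ such that $$\sum_{i=0}^{N-L}\alpha_i=1,\qquad \begin{bmatrix}H_L(u^d)\\ H_L(y^d)\end{bmatrix}\alpha=\begin{bmatrix}u\\ y\end{bmatrix},$$ where $u=(u_0^\top,\dots,u_{L-1}^\top)^\top$ and $y=(y_0^\top,\dots,y_{L-1}^\top)^\top$.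
   Context: For a sequence $\{z_k\}_{k=0}^{N-1}$, the Hankel matrix of depth $L$ is $$H_L(z)=\begin{bmatrix}z_0&z_1&\cdots&z_{N-L}\\ z_1&z_2&\cdots&z_{N-L+1}\\ \vdots&\vdots&\ddots&\vdots\\ z_{L-1}&z_L&\cdots&z_{N-1}\end{bmatrix},$$ and $z_{[a,b]}$ denotes the stacked window $(z_a^\top,\dots,z_b^\top)^\top$ (so $H_1(x^d_{[0,N-L]})=[x_0^d\ \cdots\ x_{N-L}^d]$). $\mathbb{1}_q$ denotes the $q$-dimensional column vector of ones. The matrices $A,B,C,D$ and vectors $e,r$ are unknown to the user but fixed. *)

theory Defs
  imports "Jordan_Normal_Form.DL_Rank"
begin

text \<open>Block Hankel matrix of depth L built from the q-dimensional vector sequence z_0,...,z_{N-1}: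
  it has q*L rows and N-L+1 columns; block row i, column j is z_{i+j}.\<close>
definition hankel :: "nat \<Rightarrow> nat \<Rightarrow> nat \<Rightarrow> (nat \<Rightarrow> real vec) \<Rightarrow> real mat" where
  "hankel q L N z = mat (q * L) (N - L + 1) (\<lambda>(i, j). z (j + i div q) $ (i mod q))"

definition stack :: "nat \<Rightarrow> nat \<Rightarrow> (nat \<Rightarrow> real vec) \<Rightarrow> real vec" where
  "stack q L z = vec (q * L) (\<lambda>i. z (i div q) $ (i mod q))"

definition pe_mat :: "nat \<Rightarrow> nat \<Rightarrow> nat \<Rightarrow> nat \<Rightarrow> (nat \<Rightarrow> real vec) \<Rightarrow> (nat \<Rightarrow> real vec) \<Rightarrow> real mat" where
  "pe_mat m n L N u x =
     (hankel m L N u @\<^sub>r hankel n 1 (N - L + 1) x) @\<^sub>r mat 1 (N - L + 1) (\<lambda>_. 1)"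

definition mrank :: "real mat \<Rightarrow> nat" where
  "mrank M = vec_space.rank (dim_row M) M"

definition is_traj ::
  "real mat \<Rightarrow> real mat \<Rightarrow> real mat \<Rightarrow> real mat \<Rightarrow> real vec \<Rightarrow> real vec \<Rightarrow> nat \<Rightarrow> nat \<Rightarrow>
   nat \<Rightarrow> (nat \<Rightarrow> real vec) \<Rightarrow> (nat \<Rightarrow> real vec) \<Rightarrow> (nat \<Rightarrow> real vec) \<Rightarrow> bool" where
  "is_traj A B C D e r n m T u x y \<longleftrightarrow>
     (\<forall>k<T. u k \<in> carrier_vec m \<and> x k \<in> carrier_vec n \<and>
            y k = C *\<^sub>v x k + D *\<^sub>v u k + r) \<and>
     (\<forall>k. k + 1 < T \<longrightarrow> x (k + 1) = A *\<^sub>v x k + B *\<^sub>v u k + e)"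

end

theory Submission
  imports Defs
begin

text \<open>An affine combination (weights summing to one) of length-L windows of a trajectory of an
  affine system is again a trajectory: the weights summing to one carry the constant terms e and r
  through.  Conversely, persistency of excitation says that the stacked matrix of input windows,
  initial states and the all-ones row has full row rank, so some affine combination of the data
  windows has any prescribed input window u and initial state x0.  That combination is a
  trajectory, and trajectories are determined by input and initial state, so its output is y.\<close>

lemma (in vec_space) full_row_rank_solvable:
  assumes M: "M \<in> carrier_mat n nc" and rk: "rank M = n" and b: "b \<in> carrier_vec n"
  shows "\<exists>x\<in>carrier_vec nc. M *\<^sub>v x = b"
proof -
  let ?S = "set (cols M)"
  have S: "?S \<subseteq> carrier V" using M cols_dim[of M] by simp
  have sub: "submodule class_ring (span ?S) V" using S span_is_submodule by simp
  have W: "vectorspace class_ring (span_vs ?S)"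
    using S span_is_subspace subspace_def subspace_is_vs by simp
  obtain bs where bs: "finite bs" "vectorspace.basis class_ring (span_vs ?S) bs"
    using vectorspace.finite_basis_exists[OF W fin_dim_span_cols[OF M]] by blast
  have "card bs = n"
    using vectorspace.dim_basis[OF W bs] rk unfolding rank_def by simp
  have bs_span: "bs \<subseteq> span ?S" using bs(2) unfolding vectorspace.basis_def[OF W] by simp
  have "lin_indpt bs"
    using bs(2) span_li_not_depend(2)[OF bs_span sub] unfolding vectorspace.basis_def[OF W] by simp
  moreover have "bs \<subseteq> carrier_vec n" using bs_span sub unfolding submodule_def by auto
  ultimately have "basis bs"
    using dim_li_is_basis[OF fin_dim bs(1)] \<open>card bs = n\<close> by (simp add: dim_is_n)
  then have "b \<in> span bs" using b unfolding basis_def by simp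
  then have "b \<in> col_space M"
    using span_is_subset[OF bs_span sub] unfolding col_space_def by blast
  then show ?thesis using col_space_eq[OF M] M by auto
qed

definition shifted_comb :: "nat \<Rightarrow> nat \<Rightarrow> real vec \<Rightarrow> (nat \<Rightarrow> real vec) \<Rightarrow> nat \<Rightarrow> real vec" where
  "shifted_comb q K \<alpha> z k = vec q (\<lambda>l. \<Sum>j<K. z (j + k) $ l * \<alpha> $ j)"

lemma shifted_comb_carrier [simp]: "shifted_comb q K \<alpha> z k \<in> carrier_vec q"
  by (simp add: shifted_comb_def)

lemma hankel_carrier [simp]: "hankel q L N z \<in> carrier_mat (q * L) (N - L + 1)"
  by (simp add: hankel_def)

lemma hankel_mult_vec_index:
  assumes "\<alpha> \<in> carrier_vec (N - L + 1)" and "i < q * L"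
  shows "(hankel q L N z *\<^sub>v \<alpha>) $ i = shifted_comb q (N - L + 1) \<alpha> z (i div q) $ (i mod q)"
proof -
  have "q > 0" using \<open>i < q * L\<close> by (cases q) auto
  then show ?thesis
    using assms by (simp add: hankel_def shifted_comb_def mult_mat_vec_def scalar_prod_def
        lessThan_atLeast0)
qed

lemma hankel_mult_vec_eq_stack_iff:
  assumes \<alpha>: "\<alpha> \<in> carrier_vec (N - L + 1)" and w: "\<forall>k<L. w k \<in> carrier_vec q"
  shows "hankel q L N z *\<^sub>v \<alpha> = stack q L w \<longleftrightarrow> (\<forall>k<L. shifted_comb q (N - L + 1) \<alpha> z k = w k)"
proof
  assume eq: "hankel q L N z *\<^sub>v \<alpha> = stack q L w"
  show "\<forall>k<L. shifted_comb q (N - L + 1) \<alpha> z k = w k"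
  proof (intro allI impI eq_vecI)
    fix k l assume k: "k < L" and "l < dim_vec (w k)"
    then have l: "l < q" using w by auto
    have "k * q + l < (k + 1) * q" using l by simp
    also have "\<dots> \<le> L * q" using k by (intro mult_right_mono) auto
    also have "\<dots> = q * L" by (simp add: mult.commute)
    finally have i: "k * q + l < q * L" .
    have "(hankel q L N z *\<^sub>v \<alpha>) $ (k * q + l) = stack q L w $ (k * q + l)" using eq by simp
    then show "shifted_comb q (N - L + 1) \<alpha> z k $ l = w k $ l"
      using hankel_mult_vec_index[OF \<alpha> i, of z] i l by (simp add: stack_def)
  qed (use w in auto)
next
  assume h: "\<forall>k<L. shifted_comb q (N - L + 1) \<alpha> z k = w k"
  show "hankel q L N z *\<^sub>v \<alpha> = stack q L w"
  proof (rule eq_vecI)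
    fix i assume "i < dim_vec (stack q L w)"
    then have i: "i < q * L" by (simp add: stack_def)
    then have "i div q < L" by (simp add: less_mult_imp_div_less mult.commute)
    then show "(hankel q L N z *\<^sub>v \<alpha>) $ i = stack q L w $ i"
      using hankel_mult_vec_index[OF \<alpha> i, of z] h i by (simp add: stack_def)
  qed (simp add: stack_def hankel_def)
qed

lemma mult_mat_vec_shifted_comb:
  assumes M: "M \<in> carrier_mat a q" and z: "\<forall>j<K. z (j + k) \<in> carrier_vec q"
  shows "M *\<^sub>v shifted_comb q K \<alpha> z k = shifted_comb a K \<alpha> (\<lambda>i. M *\<^sub>v z i) k"
proof (rule eq_vecI)
  fix i assume "i < dim_vec (shifted_comb a K \<alpha> (\<lambda>i. M *\<^sub>v z i) k)"
  then have i: "i < a" by (simp add: shifted_comb_def)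
  have "(M *\<^sub>v shifted_comb q K \<alpha> z k) $ i = (\<Sum>l<q. M $$ (i, l) * (\<Sum>j<K. z (j + k) $ l * \<alpha> $ j))"
    using M i by (simp add: mult_mat_vec_def scalar_prod_def shifted_comb_def lessThan_atLeast0)
  also have "\<dots> = (\<Sum>j<K. (\<Sum>l<q. M $$ (i, l) * z (j + k) $ l) * \<alpha> $ j)"
    by (simp add: sum_distrib_left sum_distrib_right mult.assoc) (rule sum.swap)
  also have "\<dots> = (\<Sum>j<K. (M *\<^sub>v z (j + k)) $ i * \<alpha> $ j)"
    using M i z by (auto simp: mult_mat_vec_def scalar_prod_def lessThan_atLeast0 intro!: sum.cong)
  finally show "(M *\<^sub>v shifted_comb q K \<alpha> z k) $ i = shifted_comb a K \<alpha> (\<lambda>i. M *\<^sub>v z i) k $ i"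
    using i by (simp add: shifted_comb_def)
qed (use M in \<open>simp add: shifted_comb_def\<close>)

lemma shifted_comb_affine_relation:
  assumes M: "M \<in> carrier_mat q n1" and M': "M' \<in> carrier_mat q n2" and c: "c \<in> carrier_vec q"
    and \<alpha>: "(\<Sum>j<K. \<alpha> $ j) = 1"
    and a: "\<forall>j<K. a (j + k) \<in> carrier_vec n1" and b: "\<forall>j<K. b (j + k) \<in> carrier_vec n2"
    and w: "\<forall>j<K. w (j + k') = M *\<^sub>v a (j + k) + M' *\<^sub>v b (j + k) + c"
  shows "shifted_comb q K \<alpha> w k' =
    M *\<^sub>v shifted_comb n1 K \<alpha> a k + M' *\<^sub>v shifted_comb n2 K \<alpha> b k + c"
proof (rule eq_vecI)
  fix l assume "l < dim_vec (M *\<^sub>v shifted_comb n1 K \<alpha> a k + M' *\<^sub>v shifted_comb n2 K \<alpha> b k + c)"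
  then have l: "l < q" using M c by simp
  have "shifted_comb q K \<alpha> w k' $ l =
      (\<Sum>j<K. ((M *\<^sub>v a (j + k)) $ l + (M' *\<^sub>v b (j + k)) $ l + c $ l) * \<alpha> $ j)"
    using l w a b M M' c by (auto simp: shifted_comb_def intro!: sum.cong)
  also have "\<dots> = (\<Sum>j<K. (M *\<^sub>v a (j + k)) $ l * \<alpha> $ j)
      + (\<Sum>j<K. (M' *\<^sub>v b (j + k)) $ l * \<alpha> $ j) + c $ l * (\<Sum>j<K. \<alpha> $ j)"
    by (simp add: distrib_right sum.distrib sum_distrib_left)
  also have "\<dots> = (M *\<^sub>v shifted_comb n1 K \<alpha> a k + M' *\<^sub>v shifted_comb n2 K \<alpha> b k + c) $ l"
    using mult_mat_vec_shifted_comb[OF M a, of \<alpha>] mult_mat_vec_shifted_comb[OF M' b, of \<alpha>] l M M' c \<alpha>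
    by (simp add: shifted_comb_def)
  finally show "shifted_comb q K \<alpha> w k' $ l =
      (M *\<^sub>v shifted_comb n1 K \<alpha> a k + M' *\<^sub>v shifted_comb n2 K \<alpha> b k + c) $ l" .
qed (use M c in simp)

lemma is_traj_shifted_comb:
  assumes A: "A \<in> carrier_mat n n" and B: "B \<in> carrier_mat n m"
    and C: "C \<in> carrier_mat p n" and D: "D \<in> carrier_mat p m"
    and e: "e \<in> carrier_vec n" and r: "r \<in> carrier_vec p"
    and traj: "is_traj A B C D e r n m N u x y" and "L \<le> N"
    and \<alpha>: "(\<Sum>j<N - L + 1. \<alpha> $ j) = 1"
  shows "is_traj A B C D e r n m L (shifted_comb m (N - L + 1) \<alpha> u)
           (shifted_comb n (N - L + 1) \<alpha> x) (shifted_comb p (N - L + 1) \<alpha> y)"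
  unfolding is_traj_def
proof (intro conjI allI impI)
  fix k assume "k < L"
  then have "\<forall>j<N - L + 1. j + k < N" using \<open>L \<le> N\<close> by auto
  then show "shifted_comb p (N - L + 1) \<alpha> y k =
      C *\<^sub>v shifted_comb n (N - L + 1) \<alpha> x k + D *\<^sub>v shifted_comb m (N - L + 1) \<alpha> u k + r"
    using traj by (intro shifted_comb_affine_relation[OF C D r \<alpha>]) (auto simp: is_traj_def)
next
  fix k assume "k + 1 < L"
  then have "\<forall>j<N - L + 1. j + k + 1 < N" using \<open>L \<le> N\<close> by auto
  then show "shifted_comb n (N - L + 1) \<alpha> x (k + 1) =
      A *\<^sub>v shifted_comb n (N - L + 1) \<alpha> x k + B *\<^sub>v shifted_comb m (N - L + 1) \<alpha> u k + e"
    using traj by (intro shifted_comb_affine_relation[OF A B e \<alpha>]) (auto simp: is_traj_def)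
qed simp_all

lemma is_traj_cong:
  assumes "\<forall>k<T. u k = u' k \<and> x k = x' k \<and> y k = y' k"
  shows "is_traj A B C D e r n m T u x y \<longleftrightarrow> is_traj A B C D e r n m T u' x' y'"
  using assms unfolding is_traj_def by (metis add_lessD1)

lemma is_traj_determined:
  assumes "is_traj A B C D e r n m T u x y" and "is_traj A B C D e r n m T u x' y'"
    and "x 0 = x' 0" and "k < T"
  shows "x k = x' k \<and> y k = y' k"
proof -
  have "x k = x' k" using \<open>k < T\<close>
  proof (induction k)
    case (Suc k)
    then show ?case using assms(1,2) unfolding is_traj_def by (metis Suc_eq_plus1 Suc_lessD)
  qed (use assms(3) in simp)
  then show ?thesis using assms(1,2,4) unfolding is_traj_def by simp
qed

lemma pe_mat_mult_vec:
  assumes "\<alpha> \<in> carrier_vec (N - L + 1)"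
  shows "pe_mat m n L N u x *\<^sub>v \<alpha> =
    (hankel m L N u *\<^sub>v \<alpha> @\<^sub>v hankel n 1 (N - L + 1) x *\<^sub>v \<alpha>) @\<^sub>v vec 1 (\<lambda>_. \<Sum>j<N - L + 1. \<alpha> $ j)"
proof -
  have Hu: "hankel m L N u \<in> carrier_mat (m * L) (N - L + 1)" by (rule hankel_carrier)
  have Hx: "hankel n 1 (N - L + 1) x \<in> carrier_mat n (N - L + 1)"
    using hankel_carrier[of n 1 "N - L + 1" x] by simp
  have O: "mat 1 (N - L + 1) (\<lambda>_. 1) \<in> carrier_mat 1 (N - L + 1)" by simp
  have "mat 1 (N - L + 1) (\<lambda>_. 1) *\<^sub>v \<alpha> = vec 1 (\<lambda>_. \<Sum>j<N - L + 1. \<alpha> $ j)"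
    using assms by (intro eq_vecI) (auto simp: mult_mat_vec_def scalar_prod_def lessThan_atLeast0)
  then show ?thesis
    unfolding pe_mat_def mat_mult_append[OF carrier_append_rows[OF Hu Hx] O assms]
      mat_mult_append[OF Hu Hx assms] by simp
qed

lemma pe_mat_full_rank_interpolates:
  assumes rk: "mrank (pe_mat m n L N u x) = m * L + n + 1"
    and w: "w \<in> carrier_vec (m * L)" and x0: "x0 \<in> carrier_vec n"
  obtains \<alpha> where "\<alpha> \<in> carrier_vec (N - L + 1)" and "(\<Sum>j<N - L + 1. \<alpha> $ j) = 1"
    and "hankel m L N u *\<^sub>v \<alpha> = w" and "shifted_comb n (N - L + 1) \<alpha> x 0 = x0"
proof -
  have Hx: "hankel n 1 (N - L + 1) x \<in> carrier_mat n (N - L + 1)"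
    using hankel_carrier[of n 1 "N - L + 1" x] by simp
  have P: "pe_mat m n L N u x \<in> carrier_mat (m * L + n + 1) (N - L + 1)"
    unfolding pe_mat_def using Hx hankel_carrier[of m L N u]
    by (intro carrier_append_rows) auto
  have "(w @\<^sub>v x0) @\<^sub>v vec 1 (\<lambda>_. 1) \<in> carrier_vec (m * L + n + 1)"
    using w x0 by (intro append_carrier_vec) auto
  then obtain \<alpha> where \<alpha>: "\<alpha> \<in> carrier_vec (N - L + 1)"
    and "pe_mat m n L N u x *\<^sub>v \<alpha> = (w @\<^sub>v x0) @\<^sub>v vec 1 (\<lambda>_. 1)"
    using vec_space.full_row_rank_solvable[OF P] rk P unfolding mrank_def by auto
  then have "(hankel m L N u *\<^sub>v \<alpha> @\<^sub>v hankel n 1 (N - L + 1) x *\<^sub>v \<alpha>)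
      @\<^sub>v vec 1 (\<lambda>_. \<Sum>j<N - L + 1. \<alpha> $ j) = (w @\<^sub>v x0) @\<^sub>v vec 1 (\<lambda>_. 1)"
    by (simp add: pe_mat_mult_vec)
  moreover have "hankel m L N u *\<^sub>v \<alpha> @\<^sub>v hankel n 1 (N - L + 1) x *\<^sub>v \<alpha> \<in> carrier_vec (m * L + n)"
    using mult_mat_vec_carrier[OF hankel_carrier \<alpha>] mult_mat_vec_carrier[OF Hx \<alpha>] by simp
  moreover have "w @\<^sub>v x0 \<in> carrier_vec (m * L + n)" using w x0 by auto
  ultimately have "hankel m L N u *\<^sub>v \<alpha> @\<^sub>v hankel n 1 (N - L + 1) x *\<^sub>v \<alpha> = w @\<^sub>v x0"
    and weights: "vec 1 (\<lambda>_. \<Sum>j<N - L + 1. \<alpha> $ j) = vec 1 (\<lambda>_. 1 :: real)"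
    using append_vec_eq by blast+
  moreover have "hankel m L N u *\<^sub>v \<alpha> \<in> carrier_vec (m * L)"
    using mult_mat_vec_carrier[OF hankel_carrier \<alpha>] .
  ultimately have input: "hankel m L N u *\<^sub>v \<alpha> = w" and "hankel n 1 (N - L + 1) x *\<^sub>v \<alpha> = x0"
    using append_vec_eq w by blast+
  moreover have "stack n 1 (\<lambda>_. x0) = x0" using x0 by (intro eq_vecI) (auto simp: stack_def)
  moreover have "\<alpha> \<in> carrier_vec (N - L + 1 - 1 + 1)" using \<alpha> by simp
  ultimately have "shifted_comb n (N - L + 1) \<alpha> x 0 = x0"
    using hankel_mult_vec_eq_stack_iff[of \<alpha> "N - L + 1" 1 "\<lambda>_. x0" n x] x0 by simp
  moreover have "(\<Sum>j<N - L + 1. \<alpha> $ j) = 1" using weights by (metis index_vec less_one)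
  ultimately show ?thesis using that[OF \<alpha> _ input] by blast
qed

theorem theorem1:
  fixes A B C D :: "real mat" and e r :: "real vec" and n m p L N :: nat
    and ud xd yd :: "nat \<Rightarrow> real vec"
  assumes "A \<in> carrier_mat n n" and "B \<in> carrier_mat n m"
    and "C \<in> carrier_mat p n" and "D \<in> carrier_mat p m"
    and "e \<in> carrier_vec n" and "r \<in> carrier_vec p"
    and "is_traj A B C D e r n m N ud xd yd"
    and "1 \<le> L" and "L \<le> N"
    and "mrank (pe_mat m n L N ud xd) = m * L + n + 1"
  shows "\<forall>u y :: nat \<Rightarrow> real vec.
           (\<forall>k<L. u k \<in> carrier_vec m \<and> y k \<in> carrier_vec p) \<longrightarrow>
           ((\<exists>x. is_traj A B C D e r n m L u x y) \<longleftrightarrow>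
            (\<exists>\<alpha> \<in> carrier_vec (N - L + 1).
               (\<Sum>i<N - L + 1. \<alpha> $ i) = 1 \<and>
               hankel m L N ud *\<^sub>v \<alpha> = stack m L u \<and>
               hankel p L N yd *\<^sub>v \<alpha> = stack p L y))"
proof -
  let ?comb = "\<lambda>q \<alpha> z. shifted_comb q (N - L + 1) \<alpha> z"
  have windows: "is_traj A B C D e r n m L u (?comb n \<alpha> xd) (?comb p \<alpha> yd)"
    if "(\<Sum>i<N - L + 1. \<alpha> $ i) = 1" and "\<forall>k<L. ?comb m \<alpha> ud k = u k" for \<alpha> u
    using is_traj_shifted_comb[OF assms(1-7,9) that(1)] is_traj_cong that(2) by blast
  show ?thesis
  proof (intro allI impI iffI; elim exE bexE conjE)
    fix u y x
    assume uy: "\<forall>k<L. u k \<in> carrier_vec m \<and> y k \<in> carrier_vec p"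
      and x: "is_traj A B C D e r n m L u x y"
    have "stack m L u \<in> carrier_vec (m * L)" "x 0 \<in> carrier_vec n"
      using x \<open>1 \<le> L\<close> by (auto simp: stack_def is_traj_def)
    then obtain \<alpha> where \<alpha>: "\<alpha> \<in> carrier_vec (N - L + 1)" "(\<Sum>i<N - L + 1. \<alpha> $ i) = 1"
      and Hu: "hankel m L N ud *\<^sub>v \<alpha> = stack m L u" and "?comb n \<alpha> xd 0 = x 0"
      by (rule pe_mat_full_rank_interpolates[OF assms(10)])
    then have "\<forall>k<L. ?comb p \<alpha> yd k = y k"
      using is_traj_determined[OF windows x] hankel_mult_vec_eq_stack_iff uy by blast
    then show "\<exists>\<alpha> \<in> carrier_vec (N - L + 1). (\<Sum>i<N - L + 1. \<alpha> $ i) = 1 \<and>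
        hankel m L N ud *\<^sub>v \<alpha> = stack m L u \<and> hankel p L N yd *\<^sub>v \<alpha> = stack p L y"
      using \<alpha> Hu hankel_mult_vec_eq_stack_iff uy by blast
  next
    fix u y \<alpha>
    assume uy: "\<forall>k<L. u k \<in> carrier_vec m \<and> y k \<in> carrier_vec p"
      and \<alpha>: "\<alpha> \<in> carrier_vec (N - L + 1)" "(\<Sum>i<N - L + 1. \<alpha> $ i) = 1"
      and "hankel m L N ud *\<^sub>v \<alpha> = stack m L u" "hankel p L N yd *\<^sub>v \<alpha> = stack p L y"
    then have u_comb: "\<forall>k<L. ?comb m \<alpha> ud k = u k" and y_comb: "\<forall>k<L. ?comb p \<alpha> yd k = y k"
      using hankel_mult_vec_eq_stack_iff by blast+
    have "is_traj A B C D e r n m L u (?comb n \<alpha> xd) y"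
      using windows[OF \<alpha>(2) u_comb] y_comb is_traj_cong[of L u u "?comb n \<alpha> xd" "?comb n \<alpha> xd" "?comb p \<alpha> yd" y]
      by simp
    then show "\<exists>x. is_traj A B C D e r n m L u x y" by blast
  qed
qed

end
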